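(* Consider the UAV-SAR coverage maximization problem (P.1) described in the context, with all system parameters fixed (in particular $\delta_t>0$, $P_{\mathrm{prop}}>0$, $q_{\mathrm{start}}\ge 0$ finite, and $M$ a fixed positive integer). Then the set of numbers of azimuth sweeps $N\in\mathbb{N}$ for which problem (P.1) with that $N$ has a feasible point is finite.
   Context: Fixed system parameters: a time-slot duration $\delta_t>0$; a UAV speed $v>0$; $\Delta_y=\delta_t v$; a positive integer $M$ (number of time slots per azimuth sweep, with $L=M\Delta_y$); a radar depression angle $\theta_d$ and 3dB beamwidth $\Theta_{3\mathrm{dB}}$, with $\theta_1=\theta_d-\Theta_{3\mathrm{dB}}/2$ and $\theta_2=\theta_d+\Theta_{3\mathrm{dB}}/2$; altitude bounds $0<z_{\min}\le z_{\max}$; maximal powers $P_{\mathrm{sar}}^{\max},P_{\mathrm{com}}^{\max}\ge 0$; a constant propulsion power $P_{\mathrm{prop}}>0$; an initial battery energy $q_{\mathrm{start}}\ge 0$; a base station position $\mathbf b=(x_b,y_b,z_b)$; positive constants $B_r,B_c,\tau_p,\mathrm{PRF},c,\gamma,R_{\mathrm{sl}},\mathrm{SNR}_{\min}$ and a positive constant $K$ (collecting $G_tG_r\lambda^3\sigma_0 c\tau_p\mathrm{PRF}\sin^2(\theta_d)/((4\pi)^4 k T_o NF B_r L_{\mathrm{tot}} v)$); and $\Omega=\frac{\cos\theta_1-\cos\theta_2}{\cos\theta_1\cos\theta_2}$. For a given number of azimuth sweeps $N\in\mathbb{N}$, time slots are indexed by $n\in\{1,\dots,NM\}$. Let $\mathcal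 A=\{k\in\{1,\dots,NM\}:(k-1)\bmod M\neq 0\}$ and $\mathcal A^c=\{1,M+1,\dots,(N-1)M+1\}$. The $y$-coordinates are fixed: $y(1)=0$, $y(n+1)=y(n)+c(n)\Delta_y$ for $n\in\{1,\dots,NM-1\}$, where $c(n)=1$ if $\lceil n/M\rceil$ is odd and $c(n)=-1$ otherwise. The optimization variables are real vectors $x(n),z(n),q(n),P_{\mathrm{sar}}(n),P_{\mathrm{com}}(n)$, $n=1,\dots,NM$. Define $d(n)=\sqrt{(x(n)-x_b)^2+(y(n)-y_b)^2+(z(n)-z_b)^2}$, $R(n)=B_c\log_2\!\big(1+\frac{P_{\mathrm{com}}(n)\gamma}{d^2(n)}\big)$, $R_{\min}(n)=B_r\big(\frac{2z(n)\Omega}{c}+\tau_p\big)\mathrm{PRF}$, and $\mathrm{SNR}(n)=\frac{K\,P_{\mathrm{sar}}(n)}{z(n)^3}$. Problem (P.1) for given $N$: maximize $C=\sum_{n=1}^{NM}\Delta_y z(n)(\tan\theta_2-\tan\theta_1)$ subject to C1: $x(1)=-\tan(\theta_1)z(1)$; C2: $x(n)=x(n-1)+z(n-1)\tan\theta_2-z(n)\tan\theta_1$ for all $n\in\mathcal A^c\setminus\{1\}$; C3: $x(n+1)=x(n)$ for all $n\in\mathcal A$; C4: $z(n+1)=z(n)$ for all $n\in\mathcal A$; C5: $P_{\mathrm{sar}}(n+1)=P_{\mathrm{sar}}(n)$ for all $n\in\mathcal A$; C6: $z_{\min}\le z(n)\le z_{\max}$ for all $n$; C7: $\mathrm{SNR}(n)\ge\mathrm{SNR}_{\min}$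 for all $n$; C8: $R(n)\ge R_{\min}(n)+R_{\mathrm{sl}}$ for all $n$; C9: $0\le P_{\mathrm{sar}}(n)\le P_{\mathrm{sar}}^{\max}$ and $0\le P_{\mathrm{com}}(n)\le P_{\mathrm{com}}^{\max}$ for all $n$; C10: $q(1)=q_{\mathrm{start}}$ and $q(n)\ge 0$ for all $n$; C11: $q(n+1)=q(n)-\delta_t\big(P_{\mathrm{com}}(n)+P_{\mathrm{sar}}(n)+P_{\mathrm{prop}}\big)$ for all $n\in\{1,\dots,NM-1\}$. A feasible point for $N$ is an assignment of the variables satisfying C1–C11. *)

theory Defs
  imports Complex_Main
begin

record uav_params =
  dt :: real
  vel :: real
  Mslots :: nat       (* M, time slots per azimuth sweep *)
  theta_d :: real     (* depression angle *)
  theta_3dB :: real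
  z_min :: real
  z_max :: real
  Psar_max :: real
  Pcom_max :: real
  P_prop :: real
  q_start :: real
  x_b :: real
  y_b :: real
  z_b :: real
  B_r :: real
  B_c :: real
  tau_p :: real
  PRF :: real
  c_light :: real
  gamma_c :: real
  R_sl :: real
  SNR_min :: real
  K_const :: real

definition Delta_y :: "uav_params \<Rightarrow> real" where
  "Delta_y p = dt p * vel p"

definition theta1 :: "uav_params \<Rightarrow> real" where
  "theta1 p = theta_d p - theta_3dB p / 2"

definition theta2 :: "uav_params \<Rightarrow> real" where
  "theta2 p = theta_d p + theta_3dB p / 2"

definition Omega :: "uav_params \<Rightarrow> real" where
  "Omega p = (cos (theta1 p) - cos (theta2 p)) / (cos (theta1 p) * cos (theta2 p))"

definition cdir :: "uav_params \<Rightarrow> nat \<Rightarrow> real" where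
  "cdir p n = (if odd (\<lceil>real n / real (Mslots p)\<rceil>) then 1 else -1)"

text \<open>Fixed y-coordinates: y(1) = 0, y(n+1) = y(n) + c(n) Delta_y.\<close>
definition ycoord :: "uav_params \<Rightarrow> nat \<Rightarrow> real" where
  "ycoord p n = (\<Sum>k=1..<n. cdir p k * Delta_y p)"

definition setA :: "uav_params \<Rightarrow> nat \<Rightarrow> nat set" where
  "setA p N = {k \<in> {1..N * Mslots p}. (k - 1) mod Mslots p \<noteq> 0}"

definition setAc :: "uav_params \<Rightarrow> nat \<Rightarrow> nat set" where
  "setAc p N = {j * Mslots p + 1 | j. j < N}"

definition dist_bs :: "uav_params \<Rightarrow> (nat \<Rightarrow> real) \<Rightarrow> (nat \<Rightarrow> real) \<Rightarrow> nat \<Rightarrow> real" where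
  "dist_bs p x z n = sqrt ((x n - x_b p)^2 + (ycoord p n - y_b p)^2 + (z n - z_b p)^2)"

definition rate :: "uav_params \<Rightarrow> (nat \<Rightarrow> real) \<Rightarrow> (nat \<Rightarrow> real) \<Rightarrow> (nat \<Rightarrow> real) \<Rightarrow> nat \<Rightarrow> real" where
  "rate p x z Pcom n = B_c p * log 2 (1 + Pcom n * gamma_c p / (dist_bs p x z n)^2)"

definition R_min :: "uav_params \<Rightarrow> (nat \<Rightarrow> real) \<Rightarrow> nat \<Rightarrow> real" where
  "R_min p z n = B_r p * (2 * z n * Omega p / c_light p + tau_p p) * PRF p"

definition SNR :: "uav_params \<Rightarrow> (nat \<Rightarrow> real) \<Rightarrow> (nat \<Rightarrow> real) \<Rightarrow> nat \<Rightarrow> real" where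
  "SNR p z Psar n = K_const p * Psar n / (z n)^3"

text \<open>Feasible point of (P.1) for N sweeps: variables indexed by n = 1..NM
  (functions on nat; values outside this range are unconstrained except where
  a constraint literally refers to them).\<close>
definition feasible_point :: "uav_params \<Rightarrow> nat \<Rightarrow> (nat \<Rightarrow> real) \<Rightarrow> (nat \<Rightarrow> real)
    \<Rightarrow> (nat \<Rightarrow> real) \<Rightarrow> (nat \<Rightarrow> real) \<Rightarrow> (nat \<Rightarrow> real) \<Rightarrow> bool" where
  "feasible_point p N x z q Psar Pcom \<longleftrightarrow>
     x 1 = - tan (theta1 p) * z 1 \<and>
     (\<forall>n \<in> setAc p N - {1}. x n = x (n - 1) + z (n - 1) * tan (theta2 p) - z n * tan (theta1 p)) \<and>
     (\<forall>n \<in> setA p N. x (n + 1) = x n) \<and>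
     (\<forall>n \<in> setA p N. z (n + 1) = z n) \<and>
     (\<forall>n \<in> setA p N. Psar (n + 1) = Psar n) \<and>
     (\<forall>n \<in> {1..N * Mslots p}. z_min p \<le> z n \<and> z n \<le> z_max p) \<and>
     (\<forall>n \<in> {1..N * Mslots p}. SNR p z Psar n \<ge> SNR_min p) \<and>
     (\<forall>n \<in> {1..N * Mslots p}. rate p x z Pcom n \<ge> R_min p z n + R_sl p) \<and>
     (\<forall>n \<in> {1..N * Mslots p}. 0 \<le> Psar n \<and> Psar n \<le> Psar_max p \<and>
                                 0 \<le> Pcom n \<and> Pcom n \<le> Pcom_max p) \<and>
     q 1 = q_start p \<and> (\<forall>n \<in> {1..N * Mslots p}. q n \<ge> 0) \<and>
     (\<forall>n \<in> {1..<N * Mslots p}. q (n + 1) = q n - dt p * (Pcom n + Psar n + P_prop p))"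

definition P1_feasible :: "uav_params \<Rightarrow> nat \<Rightarrow> bool" where
  "P1_feasible p N \<longleftrightarrow> (\<exists>x z q Psar Pcom. feasible_point p N x z q Psar Pcom)"

end

theory Submission
  imports Defs
begin

text \<open>Every time slot consumes at least the propulsion energy \<open>dt p * P_prop p > 0\<close>,
  since the radar and communication powers are nonnegative. The battery charge therefore
  drops at least linearly in the number of slots; as it starts at \<open>q_start p\<close> and must stay
  nonnegative, the number \<open>N * Mslots p \<ge> N\<close> of slots is bounded.\<close>

lemma linear_decrease_bound:
  fixes q :: "nat \<Rightarrow> real"
  assumes step: "\<And>k. 1 \<le> k \<Longrightarrow> k < n \<Longrightarrow> q (k + 1) \<le> q k - d"
    and "1 \<le> n"
  shows "q n \<le> q 1 - d * (real n - 1)"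
  using \<open>1 \<le> n\<close> step
proof (induction n rule: dec_induct)
  case base
  then show ?case by simp
next
  case (step k)
  have "q (k + 1) \<le> q k - d"
    using step.prems \<open>1 \<le> k\<close> by simp
  moreover have "q k \<le> q 1 - d * (real k - 1)"
    using step.IH step.prems by simp
  ultimately show ?case by (simp add: algebra_simps)
qed

lemma feasible_point_energy_bound:
  assumes fp: "feasible_point p N x z q Psar Pcom"
    and "dt p \<ge> 0" and "1 \<le> N * Mslots p"
  shows "dt p * P_prop p * (real (N * Mslots p) - 1) \<le> q_start p"
proof -
  let ?n = "N * Mslots p"
  have "q (k + 1) \<le> q k - dt p * P_prop p" if "1 \<le> k" "k < ?n" for k
  proof -
    have "q (k + 1) = q k - dt p * (Pcom k + Psar k + P_prop p)"
      and "0 \<le> Psar k" "0 \<le> Pcom k"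
      using fp that unfolding feasible_point_def by auto
    moreover have "dt p * P_prop p \<le> dt p * (Pcom k + Psar k + P_prop p)"
      using \<open>dt p \<ge> 0\<close> \<open>0 \<le> Psar k\<close> \<open>0 \<le> Pcom k\<close> by (intro mult_left_mono) auto
    ultimately show ?thesis by linarith
  qed
  then have "q ?n \<le> q 1 - dt p * P_prop p * (real ?n - 1)"
    using linear_decrease_bound \<open>1 \<le> ?n\<close> by blast
  moreover have "q 1 = q_start p" and "0 \<le> q ?n"
    using fp \<open>1 \<le> ?n\<close> unfolding feasible_point_def by auto
  ultimately show ?thesis by linarith
qed

lemma P1_feasible_sweeps_bound:
  assumes "P1_feasible p N" and "N > 0"
    and "dt p > 0" and "P_prop p > 0" and "Mslots p > 0"
  shows "real N \<le> q_start p / (dt p * P_prop p) + 1"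
proof -
  have "1 \<le> N * Mslots p" and "N \<le> N * Mslots p"
    using \<open>N > 0\<close> \<open>Mslots p > 0\<close> by simp_all
  moreover obtain x z q Psar Pcom where "feasible_point p N x z q Psar Pcom"
    using \<open>P1_feasible p N\<close> unfolding P1_feasible_def by blast
  ultimately have "dt p * P_prop p * (real (N * Mslots p) - 1) \<le> q_start p"
    using feasible_point_energy_bound \<open>dt p > 0\<close> by auto
  then have "real (N * Mslots p) \<le> q_start p / (dt p * P_prop p) + 1"
    using \<open>dt p > 0\<close> \<open>P_prop p > 0\<close> by (simp add: field_simps)
  with \<open>N \<le> N * Mslots p\<close> show ?thesis by linarith
qed

theorem proposition1:
  fixes p :: uav_params
  assumes "dt p > 0" and "vel p > 0" and "Mslots p > 0"
    and "0 < z_min p" and "z_min p \<le> z_max p"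
    and "Psar_max p \<ge> 0" and "Pcom_max p \<ge> 0"
    and "P_prop p > 0" and "q_start p \<ge> 0"
    and "B_r p > 0" and "B_c p > 0" and "tau_p p > 0" and "PRF p > 0"
    and "c_light p > 0" and "gamma_c p > 0" and "R_sl p > 0"
    and "SNR_min p > 0" and "K_const p > 0"
  shows "finite {N :: nat. P1_feasible p N}"
proof -
  define B where "B = q_start p / (dt p * P_prop p) + 1"
  have "N \<le> nat \<lceil>B\<rceil>" if "P1_feasible p N" for N
  proof (cases "N = 0")
    case False
    then have "real N \<le> B"
      using P1_feasible_sweeps_bound that assms(1,3,8) unfolding B_def by blast
    then show ?thesis by linarith
  qed simp
  then have "{N. P1_feasible p N} \<subseteq> {..nat \<lceil>B\<rceil>}" by blast
  then show ?thesis using finite_subset by blast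
qed

end
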